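(* Let $n\in\mathbb N$, let $W,W',M,M'$ be pairwise disjoint sets each of cardinality $n$, and let $w\in W$, $m'\in M'$. There exist functions $\succ_{W\cup W'}:\mathcal P(W,M)\to\mathcal F(W\cup W',M\cup M')$ and $\succ_{M\cup M'}:\mathcal P(M,W)\to\mathcal F(M\cup M',W\cup W')$ such that for every $\succ_W\in\mathcal P(W,M)$ and $\succ_M\in\mathcal P(M,W)$ the following are equivalent: (1) $w$ is single in some marriage between $W$ and $M$ that is stable with respect to $\succ_W,\succ_M$; (2) $w$ and $m'$ are married in some marriage between $W\cup W'$ and $M\cup M'$ that is stable with respect to $\succ_{W\cup W'}(\succ_W)$ and $\succ_{M\cup M'}(\succ_M)$; (3) $w$ and $m'$ are married in every marriage between $W\cup W'$ and $M\cup M'$ that is stable with respect to $\succ_{W\cup W'}(\succ_W)$ and $\succ_{M\cup M'}(\succ_M)$.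
   Context: $\mathcal P(A,B)$ is the set of profiles assigning to each $a\in A$ a preference list, i.e. a totally ordered subset of $B$ (others unacceptable); $\mathcal F(A,B)\subseteq\mathcal P(A,B)$ consists of profiles in which every list contains all of $B$. A participant prefers $x$ over $x'$ if $x$ precedes $x'$ on their list, or $x$ is on the list and $x'$ is not (being single counts as being matched to someone off the list). A marriage is a one-to-one map between a subset of the women and a subset of the men; unmatched participants are single. A marriage is stable if every married participant is married to someone on their list and there is no blocking pair $(w,m)$ where $w$ prefers $m$ to her current situation and $m$ prefers $w$ to his. *)

theory Defs
  imports Main
begin

text \<open>A profile over A and B: each a in A gets a preference list, i.e. a repetition-free
  list of elements of B (listed = acceptable, earlier = more preferred).  Outside A the
  profile is fixed to the empty list so that profiles carry no extra information.\<close>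
definition profiles :: "'a set \<Rightarrow> 'a set \<Rightarrow> ('a \<Rightarrow> 'a list) set" where
  "profiles A B = {P. (\<forall>a\<in>A. distinct (P a) \<and> set (P a) \<subseteq> B) \<and> (\<forall>a. a \<notin> A \<longrightarrow> P a = [])}"

definition full_profiles :: "'a set \<Rightarrow> 'a set \<Rightarrow> ('a \<Rightarrow> 'a list) set" where
  "full_profiles A B = {P. P \<in> profiles A B \<and> (\<forall>a\<in>A. set (P a) = B)}"

text \<open>With list l, x is preferred over the current situation y (None = single, which
  counts as being matched to someone off the list).\<close>
definition prefers :: "'a list \<Rightarrow> 'a \<Rightarrow> 'a option \<Rightarrow> bool" where
  "prefers l x y \<longleftrightarrow> x \<in> set l \<and>
     (case y of None \<Rightarrow> True | Some y' \<Rightarrow> y' \<notin> set l \<or> x \<in> set (takeWhile (\<lambda>z. z \<noteq> y') l))"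

definition marriage :: "'a set \<Rightarrow> 'a set \<Rightarrow> ('a \<times> 'a) set \<Rightarrow> bool" where
  "marriage A B \<mu> \<longleftrightarrow> \<mu> \<subseteq> A \<times> B \<and>
     (\<forall>p\<in>\<mu>. \<forall>q\<in>\<mu>. fst p = fst q \<longleftrightarrow> snd p = snd q)"

definition wpartner :: "('a \<times> 'a) set \<Rightarrow> 'a \<Rightarrow> 'a option" where
  "wpartner \<mu> x = (if \<exists>y. (x, y) \<in> \<mu> then Some (THE y. (x, y) \<in> \<mu>) else None)"

definition mpartner :: "('a \<times> 'a) set \<Rightarrow> 'a \<Rightarrow> 'a option" where
  "mpartner \<mu> y = (if \<exists>x. (x, y) \<in> \<mu> then Some (THE x. (x, y) \<in> \<mu>) else None)"

definition stable :: "'a set \<Rightarrow> 'a set \<Rightarrow> ('a \<Rightarrow> 'a list) \<Rightarrow> ('a \<Rightarrow> 'a list) \<Rightarrow> ('a \<times> 'a) set \<Rightarrow> bool" where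
  "stable A B PA PB \<mu> \<longleftrightarrow> marriage A B \<mu> \<and>
     (\<forall>(x, y)\<in>\<mu>. y \<in> set (PA x) \<and> x \<in> set (PB y)) \<and>
     \<not> (\<exists>x\<in>A. \<exists>y\<in>B. prefers (PA x) y (wpartner \<mu> x) \<and> prefers (PB y) x (mpartner \<mu> y))"

end

theory Submission
  imports Defs
begin

text \<open>Pad the market: every woman x of W appends to her list a private man f x of M',
  with f w = m', and f x ranks x first; symmetrically every man y of M appends a private
  woman g y of W', who ranks y first.  In a stable matching of the padded market each x in W
  is then married either to a man on her original list or to f x, the latter exactly when
  she has no partner in M, and the restriction to W \<times> M is stable for the original
  market.  Since stable matchings of the padded market exist and, by the rural hospitals
  theorem, all stable matchings of the original market leave the same women single, the
  three conditions are equivalent.\<close>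

fun rank :: "'a list \<Rightarrow> 'a \<Rightarrow> nat" where
  "rank [] x = 0"
| "rank (y # ys) x = (if y = x then 0 else Suc (rank ys x))"

lemma rank_less_length: "x \<in> set l \<Longrightarrow> rank l x < length l"
  by (induction l) auto

lemma rank_notin: "x \<notin> set l \<Longrightarrow> rank l x = length l"
  by (induction l) auto

lemma rank_eq_iff: "x \<in> set l \<Longrightarrow> y \<in> set l \<Longrightarrow> rank l x = rank l y \<longleftrightarrow> x = y"
  by (induction l) auto

lemma rank_append: "rank (l @ l') x = (if x \<in> set l then rank l x else length l + rank l' x)"
  by (induction l) auto

lemma in_set_takeWhile_neq_iff:
  "x \<in> set (takeWhile (\<lambda>z. z \<noteq> y) l) \<longleftrightarrow> x \<in> set l \<and> rank l x < rank l y"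
  by (induction l) auto

lemma rank_le_rank_append_Cons:
  assumes "z \<in> set (l @ y # r)" "y \<notin> set l" "rank (l @ y # r) z \<le> rank (l @ y # r) y"
  shows "z \<in> set l \<or> z = y"
  using assms by (auto simp: rank_append split: if_splits)

lemma in_set_tlD: "x \<in> set (tl l) \<Longrightarrow> x \<in> set l"
  by (cases l) auto

definition list_of_set :: "'a set \<Rightarrow> 'a list" where
  "list_of_set S = (SOME l. distinct l \<and> set l = S)"

lemma list_of_set: "finite S \<Longrightarrow> distinct (list_of_set S) \<and> set (list_of_set S) = S"
  unfolding list_of_set_def by (rule someI_ex) (metis finite_distinct_list)

lemma append_list_of_set_Diff:
  "finite S \<Longrightarrow> distinct l \<Longrightarrow> set l \<subseteq> S \<Longrightarrow>
    distinct (l @ list_of_set (S - set l)) \<and> set (l @ list_of_set (S - set l)) = S"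
  using list_of_set[of "S - set l"] by auto

lemma bij_betw_sending:
  assumes "finite X" "finite Y" "card X = card Y" "x \<in> X" "y \<in> Y"
  shows "\<exists>f. bij_betw f X Y \<and> f x = y"
proof -
  obtain h where "bij_betw h (X - {x}) (Y - {y})"
    using finite_same_card_bij[of "X - {x}" "Y - {y}"] assms by auto
  then have "bij_betw (h(x := y)) (X - {x}) (Y - {y})"
    by (rule bij_betw_cong[THEN iffD1, rotated]) simp
  then have "bij_betw (h(x := y)) (X - {x} \<union> {x}) (Y - {y} \<union> {y})"
    using notIn_Un_bij_betw[of x "X - {x}" "h(x := y)" "Y - {y}"] by simp
  then show ?thesis
    using assms(4,5) by (metis Un_insert_right fun_upd_same insert_Diff sup_bot.right_neutral)
qed

lemma prefers_None [simp]: "prefers l x None \<longleftrightarrow> x \<in> set l"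
  by (simp add: prefers_def)

lemma prefers_Some [simp]: "prefers l x (Some y) \<longleftrightarrow> x \<in> set l \<and> rank l x < rank l y"
  using rank_less_length[of x l] rank_notin[of y l]
  by (auto simp: prefers_def in_set_takeWhile_neq_iff)

lemma prefers_in_set: "prefers l x y \<Longrightarrow> x \<in> set l"
  by (simp add: prefers_def)

lemma marriage_functional: "marriage A B \<mu> \<Longrightarrow> (x, y) \<in> \<mu> \<Longrightarrow> (x, y') \<in> \<mu> \<Longrightarrow> y = y'"
  unfolding marriage_def by fastforce

lemma marriage_injective: "marriage A B \<mu> \<Longrightarrow> (x, y) \<in> \<mu> \<Longrightarrow> (x', y) \<in> \<mu> \<Longrightarrow> x = x'"
  unfolding marriage_def by fastforce

lemma marriage_converse: "marriage A B \<mu> \<Longrightarrow> marriage B A (\<mu>\<inverse>)"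
  unfolding marriage_def by fastforce

lemma marriage_subset: "marriage A B \<mu> \<Longrightarrow> \<nu> \<subseteq> \<mu> \<Longrightarrow> \<nu> \<subseteq> A' \<times> B' \<Longrightarrow> marriage A' B' \<nu>"
  unfolding marriage_def by blast

lemma wpartner_eq_Some: "marriage A B \<mu> \<Longrightarrow> (x, y) \<in> \<mu> \<Longrightarrow> wpartner \<mu> x = Some y"
  unfolding wpartner_def by (auto intro!: the_equality dest: marriage_functional)

lemma wpartner_SomeD: "marriage A B \<mu> \<Longrightarrow> wpartner \<mu> x = Some y \<Longrightarrow> (x, y) \<in> \<mu>"
  unfolding wpartner_def by (auto split: if_splits intro: theI dest: marriage_functional)

lemma wpartner_eq_None_iff: "wpartner \<mu> x = None \<longleftrightarrow> x \<notin> Domain \<mu>"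
  unfolding wpartner_def by auto

lemma wpartner_converse: "wpartner (\<mu>\<inverse>) = mpartner \<mu>"
  by (auto simp: wpartner_def mpartner_def fun_eq_iff)

lemma mpartner_converse: "mpartner (\<mu>\<inverse>) = wpartner \<mu>"
  by (auto simp: wpartner_def mpartner_def fun_eq_iff)

lemma mpartner_eq_Some: "marriage A B \<mu> \<Longrightarrow> (x, y) \<in> \<mu> \<Longrightarrow> mpartner \<mu> y = Some x"
  by (metis converse_iff marriage_converse wpartner_converse wpartner_eq_Some)

lemma mpartner_SomeD: "marriage A B \<mu> \<Longrightarrow> mpartner \<mu> y = Some x \<Longrightarrow> (x, y) \<in> \<mu>"
  by (metis converse_iff marriage_converse wpartner_converse wpartner_SomeD)

lemma stableI:
  assumes "marriage A B \<mu>"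
    and "\<And>x y. (x, y) \<in> \<mu> \<Longrightarrow> y \<in> set (PA x) \<and> x \<in> set (PB y)"
    and "\<And>x y. x \<in> A \<Longrightarrow> y \<in> B \<Longrightarrow> prefers (PA x) y (wpartner \<mu> x) \<Longrightarrow>
           prefers (PB y) x (mpartner \<mu> y) \<Longrightarrow> False"
  shows "stable A B PA PB \<mu>"
  using assms unfolding stable_def by blast

lemma
  assumes "stable A B PA PB \<mu>"
  shows stable_marriage: "marriage A B \<mu>"
    and stable_acceptable: "(x, y) \<in> \<mu> \<Longrightarrow> y \<in> set (PA x) \<and> x \<in> set (PB y)"
    and stable_in: "(x, y) \<in> \<mu> \<Longrightarrow> x \<in> A \<and> y \<in> B"
    and stable_no_blocking_pair: "x \<in> A \<Longrightarrow> y \<in> B \<Longrightarrow> prefers (PA x) y (wpartner \<mu> x) \<Longrightarrow>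
           \<not> prefers (PB y) x (mpartner \<mu> y)"
  using assms unfolding stable_def marriage_def by blast+

lemma stable_converse: "stable A B PA PB \<mu> \<Longrightarrow> stable B A PB PA (\<mu>\<inverse>)"
  by (rule stableI)
    (auto simp: wpartner_converse mpartner_converse
      dest: stable_acceptable stable_no_blocking_pair intro: marriage_converse stable_marriage)

lemma stable_restore_head:
  assumes st: "stable A B (PA(a := tl (PA a))) PB \<mu>"
    and "PA a \<noteq> []" and "distinct (PA a)"
    and rejected: "\<not> prefers (PB (hd (PA a))) a (mpartner \<mu> (hd (PA a)))"
  shows "stable A B PA PB \<mu>"
proof (rule stableI)
  obtain h t where ht: "PA a = h # t" using \<open>PA a \<noteq> []\<close> by (cases "PA a") auto
  show m: "marriage A B \<mu>" using st by (rule stable_marriage)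
  have acc: "y \<in> set ((PA(a := t)) x) \<and> x \<in> set (PB y)" if "(x, y) \<in> \<mu>" for x y
    using stable_acceptable[OF st that] ht by simp
  show "y \<in> set (PA x) \<and> x \<in> set (PB y)" if "(x, y) \<in> \<mu>" for x y
    using acc[OF that] ht by (cases "x = a") auto
  fix x y assume x: "x \<in> A" and y: "y \<in> B" and pA: "prefers (PA x) y (wpartner \<mu> x)"
    and pB: "prefers (PB y) x (mpartner \<mu> y)"
  have "prefers ((PA(a := t)) x) y (wpartner \<mu> x)"
  proof (cases "x = a")
    case True
    have "y \<noteq> h" using rejected pB ht True by auto
    moreover have "z \<noteq> h" if "wpartner \<mu> x = Some z" for z
      using acc[OF wpartner_SomeD[OF m that]] \<open>distinct (PA a)\<close> ht True by auto
    ultimately show ?thesis using pA ht True by (cases "wpartner \<mu> x") auto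
  qed (use pA in simp)
  then show False using stable_no_blocking_pair[OF st x y] pB ht by simp
qed

lemma stable_restore_dominated_head:
  assumes st: "stable A B (PA(a2 := tl (PA a2))) PB \<mu>"
    and "a1 \<in> A" "a1 \<noteq> a2" "h \<in> B" "PA a1 = h # t1" "PA a2 = h # t2" "distinct (PA a2)"
    and a1: "a1 \<in> set (PB h)" and less: "rank (PB h) a1 < rank (PB h) a2"
  shows "stable A B PA PB \<mu>"
proof (rule stable_restore_head[OF st])
  have m: "marriage A B \<mu>" using st by (rule stable_marriage)
  \<comment> \<open>h holds someone at least as good as a1: either a1 herself, or else a1 would propose to him\<close>
  have "\<exists>u. mpartner \<mu> h = Some u \<and> rank (PB h) u \<le> rank (PB h) a1"
  proof (cases "(a1, h) \<in> \<mu>")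
    case True
    then show ?thesis using mpartner_eq_Some[OF m] by auto
  next
    case False
    have "z \<noteq> h" if "wpartner \<mu> a1 = Some z" for z
      using False wpartner_SomeD[OF m that] by auto
    then have "prefers ((PA(a2 := tl (PA a2))) a1) h (wpartner \<mu> a1)"
      using assms by (cases "wpartner \<mu> a1") auto
    then have "\<not> prefers (PB h) a1 (mpartner \<mu> h)"
      using stable_no_blocking_pair[OF st \<open>a1 \<in> A\<close> \<open>h \<in> B\<close>] by blast
    then show ?thesis using a1 by (cases "mpartner \<mu> h") auto
  qed
  then show "\<not> prefers (PB (hd (PA a2))) a2 (mpartner \<mu> (hd (PA a2)))"
    using less \<open>PA a2 = h # t2\<close> by auto
qed (use assms in auto)

lemma stable_match_heads:
  assumes PA: "\<forall>a\<in>A. set (PA a) \<subseteq> B"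
    and acceptable: "\<forall>a\<in>A. PA a \<noteq> [] \<longrightarrow> a \<in> set (PB (hd (PA a)))"
    and inj: "inj_on (\<lambda>a. hd (PA a)) {a \<in> A. PA a \<noteq> []}"
  shows "stable A B PA PB {(a, hd (PA a)) | a. a \<in> A \<and> PA a \<noteq> []}" (is "stable A B PA PB ?\<mu>")
proof (rule stableI)
  show m: "marriage A B ?\<mu>"
    unfolding marriage_def using PA inj by (auto dest: hd_in_set inj_onD)
  show "y \<in> set (PA x) \<and> x \<in> set (PB y)" if "(x, y) \<in> ?\<mu>" for x y
    using that acceptable by auto
  fix x y assume "x \<in> A" and p: "prefers (PA x) y (wpartner ?\<mu> x)"
  then have "PA x \<noteq> []" by (auto dest: prefers_in_set)
  then have "wpartner ?\<mu> x = Some (hd (PA x))"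
    using wpartner_eq_Some[OF m] \<open>x \<in> A\<close> by blast
  moreover have "rank (PA x) (hd (PA x)) = 0" by (cases "PA x") auto
  ultimately show False using p by simp
qed

text \<open>Induction on the total length of the women's lists: drop the head of a list if that man
  does not accept her, or if a woman he prefers has the same head; when neither applies,
  marrying every woman to her head is stable.\<close>
theorem stable_exists:
  assumes "finite A" and PA: "\<forall>a\<in>A. distinct (PA a) \<and> set (PA a) \<subseteq> B"
  shows "\<exists>\<mu>. stable A B PA PB \<mu>"
  using PA
proof (induction "\<Sum>a\<in>A. length (PA a)" arbitrary: PA rule: less_induct)
  case less
  let ?drop = "\<lambda>a. PA(a := tl (PA a))"
  have IH: "\<exists>\<mu>. stable A B (?drop a) PB \<mu>" if "a \<in> A" "PA a \<noteq> []" for a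
  proof (rule less.hyps)
    show "(\<Sum>x\<in>A. length (?drop a x)) < (\<Sum>x\<in>A. length (PA x))"
      using that by (intro sum_strict_mono_ex1[OF \<open>finite A\<close>]) auto
    show "\<forall>x\<in>A. distinct (?drop a x) \<and> set (?drop a x) \<subseteq> B"
      using less.prems by (auto dest: in_set_tlD simp: distinct_tl)
  qed
  consider (rejected) a where "a \<in> A" "PA a \<noteq> []" "a \<notin> set (PB (hd (PA a)))"
    | (shared) a1 a2 h t1 t2 where "a1 \<in> A" "a2 \<in> A" "a1 \<noteq> a2" "PA a1 = h # t1" "PA a2 = h # t2"
        "a1 \<in> set (PB h)" "rank (PB h) a1 < rank (PB h) a2"
    | (heads) "\<forall>a\<in>A. PA a \<noteq> [] \<longrightarrow> a \<in> set (PB (hd (PA a)))"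
        "inj_on (\<lambda>a. hd (PA a)) {a \<in> A. PA a \<noteq> []}"
  proof (cases "\<forall>a\<in>A. PA a \<noteq> [] \<longrightarrow> a \<in> set (PB (hd (PA a)))")
    case acc: True
    show thesis
    proof (cases "inj_on (\<lambda>a. hd (PA a)) {a \<in> A. PA a \<noteq> []}")
      case False
      then obtain a1 a2 where a: "a1 \<in> A" "a2 \<in> A" "a1 \<noteq> a2" "PA a1 \<noteq> []" "PA a2 \<noteq> []"
          "hd (PA a1) = hd (PA a2)"
        unfolding inj_on_def by blast
      define h where "h = hd (PA a1)"
      have in_set: "a1 \<in> set (PB h)" "a2 \<in> set (PB h)" using acc a h_def by auto
      have lists: "PA a1 = h # tl (PA a1)" "PA a2 = h # tl (PA a2)" using a h_def by (metis list.collapse)+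
      have "rank (PB h) a1 \<noteq> rank (PB h) a2" using rank_eq_iff[OF in_set] a by simp
      then consider "rank (PB h) a1 < rank (PB h) a2" | "rank (PB h) a2 < rank (PB h) a1"
        by linarith
      then show thesis
        by cases
          (use shared[OF a(1,2,3) lists in_set(1)]
             shared[OF a(2,1) a(3)[symmetric] lists(2,1) in_set(2)] in blast)+
    qed (use acc heads in blast)
  qed (use rejected in blast)
  then show ?case
  proof cases
    case (rejected a)
    obtain \<mu> where "stable A B (?drop a) PB \<mu>" using IH rejected by blast
    then have "stable A B PA PB \<mu>"
      by (rule stable_restore_head) (use rejected less.prems in \<open>auto dest: prefers_in_set\<close>)
    then show ?thesis by blast
  next
    case (shared a1 a2 h t1 t2)
    then obtain \<mu> where \<mu>: "stable A B (?drop a2) PB \<mu>" using IH[of a2] by auto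
    have "h \<in> B" "distinct (PA a2)" using less.prems shared by auto
    then have "stable A B PA PB \<mu>"
      using stable_restore_dominated_head[OF \<mu> shared(1,3) _ shared(4,5) _ shared(6,7)] by blast
    then show ?thesis by blast
  next
    case heads
    have "\<forall>a\<in>A. set (PA a) \<subseteq> B" using less.prems by blast
    then show ?thesis using stable_match_heads heads by blast
  qed
qed

lemma wpartner_the: "marriage A B \<mu> \<Longrightarrow> x \<in> Domain \<mu> \<Longrightarrow> (x, the (wpartner \<mu> x)) \<in> \<mu>"
  by (metis option.collapse wpartner_SomeD wpartner_eq_None_iff)

definition gainers :: "'a set \<Rightarrow> ('a \<Rightarrow> 'a list) \<Rightarrow> ('a \<times> 'a) set \<Rightarrow> ('a \<times> 'a) set \<Rightarrow> 'a set" where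
  "gainers A P \<mu> \<nu> = {a \<in> A. \<exists>z. (a, z) \<in> \<nu> \<and> prefers (P a) z (wpartner \<mu> a)}"

text \<open>Read on the converse marriages, \<open>gainers B PB (\<nu>\<inverse>) (\<mu>\<inverse>)\<close> are the men who prefer
  their \<mu>-partner to their \<nu>-situation.\<close>
lemma partner_of_gainer:
  assumes s\<mu>: "stable A B PA PB \<mu>" and s\<nu>: "stable A B PA PB \<nu>"
    and a: "a \<in> gainers A PA \<mu> \<nu>" and az: "(a, z) \<in> \<nu>"
  shows "z \<in> gainers B PB (\<nu>\<inverse>) (\<mu>\<inverse>)"
proof -
  have m\<mu>: "marriage A B \<mu>" and m\<nu>: "marriage A B \<nu>"
    using stable_marriage[OF s\<mu>] stable_marriage[OF s\<nu>] .
  have "a \<in> A" and pref: "prefers (PA a) z (wpartner \<mu> a)"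
    using a marriage_functional[OF m\<nu> az] unfolding gainers_def by blast+
  have "z \<in> B" and acc: "a \<in> set (PB z)" using stable_in[OF s\<nu> az] stable_acceptable[OF s\<nu> az] by auto
  have "\<not> prefers (PB z) a (mpartner \<mu> z)"
    using stable_no_blocking_pair[OF s\<mu> \<open>a \<in> A\<close> \<open>z \<in> B\<close> pref] .
  then obtain u where u: "mpartner \<mu> z = Some u" and "rank (PB z) u \<le> rank (PB z) a"
    using acc by (cases "mpartner \<mu> z") auto
  moreover have "(u, z) \<in> \<mu>" using mpartner_SomeD[OF m\<mu> u] .
  moreover have "u \<noteq> a" using pref wpartner_eq_Some[OF m\<mu>, of a z] \<open>(u, z) \<in> \<mu>\<close> by auto
  moreover have "u \<in> set (PB z)" using stable_acceptable[OF s\<mu> \<open>(u, z) \<in> \<mu>\<close>] by simp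
  ultimately have "prefers (PB z) u (Some a)"
    using rank_eq_iff[OF _ acc] by (simp add: order.order_iff_strict)
  then show ?thesis
    unfolding gainers_def wpartner_converse
    using \<open>z \<in> B\<close> \<open>(u, z) \<in> \<mu>\<close> mpartner_eq_Some[OF m\<nu> az] by auto
qed

text \<open>Rural hospitals theorem: the \<nu>-partner map injects the women who gain from \<mu> to \<nu>
  into the men who lose, and the \<mu>-partner map injects them back; by finiteness the
  latter is onto, so every gaining woman, in particular every woman single in \<mu> but not
  in \<nu>, is married in \<mu>.\<close>
theorem stable_Domain_subset:
  assumes "finite A" "finite B" and s\<mu>: "stable A B PA PB \<mu>" and s\<nu>: "stable A B PA PB \<nu>"
  shows "Domain \<nu> \<subseteq> Domain \<mu>"
proof
  fix x assume "x \<in> Domain \<nu>"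
  let ?Gw = "gainers A PA \<mu> \<nu>" and ?Gm = "gainers B PB (\<nu>\<inverse>) (\<mu>\<inverse>)"
  let ?F = "\<lambda>a. the (wpartner \<nu> a)" and ?G = "\<lambda>b. the (wpartner (\<mu>\<inverse>) b)"
  have m\<mu>: "marriage B A (\<mu>\<inverse>)" and m\<nu>: "marriage A B \<nu>"
    using marriage_converse[OF stable_marriage[OF s\<mu>]] stable_marriage[OF s\<nu>] .
  have F: "(a, ?F a) \<in> \<nu> \<and> ?F a \<in> ?Gm" if "a \<in> ?Gw" for a
    using wpartner_the[OF m\<nu>] that partner_of_gainer[OF s\<mu> s\<nu> that] unfolding gainers_def by blast
  have G: "(b, ?G b) \<in> \<mu>\<inverse> \<and> ?G b \<in> ?Gw" if "b \<in> ?Gm" for b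
    using wpartner_the[OF m\<mu>] that
      partner_of_gainer[OF stable_converse[OF s\<nu>] stable_converse[OF s\<mu>] that]
    unfolding gainers_def by auto
  have inj_F: "inj_on ?F ?Gw" by (rule inj_onI) (metis F marriage_injective[OF m\<nu>])
  have inj_G: "inj_on ?G ?Gm" by (rule inj_onI) (metis G marriage_injective[OF m\<mu>])
  have fin: "finite ?Gw" "finite ?Gm" using assms(1,2) unfolding gainers_def by auto
  have maps: "?F ` ?Gw \<subseteq> ?Gm" "?G ` ?Gm \<subseteq> ?Gw" using F G by auto
  have "?G ` ?Gm = ?Gw"
    using card_bij_eq[OF inj_F maps(1) inj_G maps(2) fin] card_image[OF inj_G] maps(2) fin
    by (intro card_subset_eq) auto
  moreover have "?G ` ?Gm \<subseteq> Domain \<mu>" by (auto dest!: G)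
  ultimately have "?Gw \<subseteq> Domain \<mu>" by simp
  moreover have "x \<in> ?Gw" if "x \<notin> Domain \<mu>"
    using \<open>x \<in> Domain \<nu>\<close> that stable_in[OF s\<nu>] stable_acceptable[OF s\<nu>]
    by (auto simp: gainers_def wpartner_eq_None_iff[THEN iffD2])
  ultimately show "x \<in> Domain \<mu>" by blast
qed

text \<open>With the roles of the two sides exchanged this also gives the men's padded profile,
  in which f a ranks a first.\<close>
definition padded_profile ::
    "'a set \<Rightarrow> 'a set \<Rightarrow> 'a set \<Rightarrow> 'a set \<Rightarrow> ('a \<Rightarrow> 'a) \<Rightarrow> ('a \<Rightarrow> 'a) \<Rightarrow> ('a \<Rightarrow> 'a list) \<Rightarrow> 'a \<Rightarrow> 'a list"
  where
  "padded_profile A A' B B' f g P x =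
     (let prefix = if x \<in> A then P x @ [f x] else if x \<in> A' then [inv_into B g x] else []
      in if x \<in> A \<union> A' then prefix @ list_of_set (B \<union> B' - set prefix) else [])"

lemma padded_profile_full:
  assumes "finite A" "finite B" "bij_betw f A B'" "bij_betw g B A'" "B \<inter> B' = {}"
    and P: "P \<in> profiles A B"
  shows "padded_profile A A' B B' f g P \<in> full_profiles (A \<union> A') (B \<union> B')"
proof -
  have fin: "finite (B \<union> B')" using assms(1-3) bij_betw_finite by auto
  have "distinct (padded_profile A A' B B' f g P x) \<and> set (padded_profile A A' B B' f g P x) = B \<union> B'"
    if "x \<in> A \<union> A'" for x
  proof (cases "x \<in> A")
    case True
    have "distinct (P x @ [f x])" "set (P x @ [f x]) \<subseteq> B \<union> B'"
      using True P bij_betw_apply[OF assms(3)] assms(5) unfolding profiles_def by auto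
    moreover have "padded_profile A A' B B' f g P x = (P x @ [f x]) @ list_of_set (B \<union> B' - set (P x @ [f x]))"
      using True by (simp add: padded_profile_def)
    ultimately show ?thesis using append_list_of_set_Diff[OF fin] by metis
  next
    case False
    then have "x \<in> A'" "inv_into B g x \<in> B"
      using that bij_betw_apply[OF bij_betw_inv_into[OF assms(4)]] by auto
    then show ?thesis
      using False append_list_of_set_Diff[OF fin, of "[inv_into B g x]"] by (simp add: padded_profile_def)
  qed
  moreover have "padded_profile A A' B B' f g P x = []" if "x \<notin> A \<union> A'" for x
    using that by (simp add: padded_profile_def)
  ultimately show ?thesis unfolding full_profiles_def profiles_def by blast
qed

locale padded_market =
  fixes A A' B B' :: "'a set" and f g :: "'a \<Rightarrow> 'a" and PA PB :: "'a \<Rightarrow> 'a list"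
  assumes finite: "finite A" "finite B"
    and f: "bij_betw f A B'" and g: "bij_betw g B A'"
    and disjoint: "A \<inter> A' = {}" "B \<inter> B' = {}"
    and PA: "PA \<in> profiles A B" and PB: "PB \<in> profiles B A"
begin

abbreviation "QA \<equiv> padded_profile A A' B B' f g PA"
abbreviation "QB \<equiv> padded_profile B B' A A' g f PB"

lemma swapped: "padded_market B B' A A' g f PB PA"
  by (simp add: padded_market_def finite f g disjoint PA PB)

lemma PA_subset: "x \<in> A \<Longrightarrow> set (PA x) \<subseteq> B"
  using PA unfolding profiles_def by blast

lemma f_notin_PA: "x \<in> A \<Longrightarrow> f x \<notin> set (PA x)"
  using PA_subset bij_betw_apply[OF f] disjoint by blast

lemma QA_full: "QA \<in> full_profiles (A \<union> A') (B \<union> B')"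
  using padded_profile_full[OF finite f g disjoint(2) PA] .

lemma QA_eq_append: "x \<in> A \<Longrightarrow> \<exists>r. QA x = PA x @ f x # r"
  unfolding padded_profile_def by simp

lemma QB_f_eq_Cons:
  assumes "x \<in> A" shows "\<exists>r. QB (f x) = x # r"
proof -
  have "f x \<in> B'" "f x \<notin> B" "inv_into A f (f x) = x"
    using bij_betw_apply[OF f] bij_betw_inv_into_left[OF f] disjoint assms by auto
  then show ?thesis by (simp add: padded_profile_def)
qed

lemma stable_padded_partner:
  assumes st: "stable (A \<union> A') (B \<union> B') QA QB \<nu>" and x: "x \<in> A"
  shows "\<exists>z. (x, z) \<in> \<nu> \<and> (z \<in> set (PA x) \<or> z = f x)"
proof -
  have m: "marriage (A \<union> A') (B \<union> B') \<nu>" using st by (rule stable_marriage)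
  obtain r where r: "QA x = PA x @ f x # r" using QA_eq_append[OF x] by blast
  obtain r' where r': "QB (f x) = x # r'" using QB_f_eq_Cons[OF x] by blast
  have fx: "f x \<in> B \<union> B'" using bij_betw_apply[OF f] x by auto
  have "\<not> prefers (QA x) (f x) (wpartner \<nu> x)"
    \<comment> \<open>otherwise x and f x would block, since f x ranks x first\<close>
  proof
    assume p: "prefers (QA x) (f x) (wpartner \<nu> x)"
    then have "(x, f x) \<notin> \<nu>" using wpartner_eq_Some[OF m] by fastforce
    then have "prefers (QB (f x)) x (mpartner \<nu> (f x))"
      using r' mpartner_SomeD[OF m] by (cases "mpartner \<nu> (f x)") auto
    then show False using stable_no_blocking_pair[OF st _ fx p] x by auto
  qed
  then obtain z where z: "wpartner \<nu> x = Some z" "rank (QA x) z \<le> rank (QA x) (f x)"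
    using r by (cases "wpartner \<nu> x") auto
  have xz: "(x, z) \<in> \<nu>" using wpartner_SomeD[OF m z(1)] .
  moreover have "z \<in> set (QA x)" using stable_acceptable[OF st xz] by simp
  ultimately show ?thesis
    using rank_le_rank_append_Cons[of z "PA x" "f x" r] r z(2) f_notin_PA[OF x] by auto
qed

lemma stable_padded_partner_in_B:
  assumes st: "stable (A \<union> A') (B \<union> B') QA QB \<nu>" and "x \<in> A" "(x, z) \<in> \<nu>" "z \<in> B"
  shows "z \<in> set (PA x)"
  using stable_padded_partner[OF st \<open>x \<in> A\<close>] marriage_functional[OF stable_marriage[OF st]]
    bij_betw_apply[OF f] disjoint assms(2-4) by blast

lemma stable_padded_unmatched:
  assumes st: "stable (A \<union> A') (B \<union> B') QA QB \<nu>" and "x \<in> A" "x \<notin> Domain (\<nu> \<inter> A \<times> B)"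
  shows "(x, f x) \<in> \<nu>"
  using stable_padded_partner[OF st \<open>x \<in> A\<close>] PA_subset assms(2,3) by blast

lemma prefers_padded:
  assumes st: "stable (A \<union> A') (B \<union> B') QA QB \<nu>" and x: "x \<in> A"
    and p: "prefers (PA x) y (wpartner (\<nu> \<inter> A \<times> B) x)"
  shows "prefers (QA x) y (wpartner \<nu> x)"
proof -
  have m: "marriage (A \<union> A') (B \<union> B') \<nu>" using st by (rule stable_marriage)
  then have m': "marriage A B (\<nu> \<inter> A \<times> B)" by (rule marriage_subset) auto
  obtain r where r: "QA x = PA x @ f x # r" using QA_eq_append[OF x] by blast
  show ?thesis
  proof (cases "x \<in> Domain (\<nu> \<inter> A \<times> B)")
    case True
    then obtain z where z: "(x, z) \<in> \<nu>" "z \<in> B" by blast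
    then have "wpartner (\<nu> \<inter> A \<times> B) x = Some z" "wpartner \<nu> x = Some z"
      using wpartner_eq_Some[OF m'] wpartner_eq_Some[OF m] x by auto
    moreover have "z \<in> set (PA x)" using stable_padded_partner_in_B[OF st x z] .
    ultimately show ?thesis using p r by (simp add: rank_append)
  next
    case False
    then have "wpartner (\<nu> \<inter> A \<times> B) x = None" "wpartner \<nu> x = Some (f x)"
      using wpartner_eq_None_iff[of "\<nu> \<inter> A \<times> B" x] wpartner_eq_Some[OF m stable_padded_unmatched[OF st x]]
      by auto
    then show ?thesis
      using p r f_notin_PA[OF x] rank_less_length[of y "PA x"] by (simp add: rank_append)
  qed
qed

theorem stable_restrict:
  assumes st: "stable (A \<union> A') (B \<union> B') QA QB \<nu>"
  shows "stable A B PA PB (\<nu> \<inter> A \<times> B)"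
proof (rule stableI)
  have st': "stable (B \<union> B') (A \<union> A') QB QA (\<nu>\<inverse>)" using stable_converse[OF st] .
  show "marriage A B (\<nu> \<inter> A \<times> B)" using stable_marriage[OF st] by (rule marriage_subset) auto
  show "y \<in> set (PA x) \<and> x \<in> set (PB y)" if "(x, y) \<in> \<nu> \<inter> A \<times> B" for x y
    using that stable_padded_partner_in_B[OF st] padded_market.stable_padded_partner_in_B[OF swapped st']
    by auto
  fix x y assume x: "x \<in> A" and y: "y \<in> B"
    and pA: "prefers (PA x) y (wpartner (\<nu> \<inter> A \<times> B) x)"
    and pB: "prefers (PB y) x (mpartner (\<nu> \<inter> A \<times> B) y)"
  have "(\<nu> \<inter> A \<times> B)\<inverse> = \<nu>\<inverse> \<inter> B \<times> A" by auto
  then have "prefers (PB y) x (wpartner (\<nu>\<inverse> \<inter> B \<times> A) y)"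
    using pB by (metis wpartner_converse)
  then have "prefers (QB y) x (wpartner (\<nu>\<inverse>) y)"
    using padded_market.prefers_padded[OF swapped st' y] by blast
  then show False
    using stable_no_blocking_pair[OF st _ _ prefers_padded[OF st x pA]] x y
    by (simp add: wpartner_converse)
qed

theorem padded_married_iff_single:
  assumes "a \<in> A"
  defines "S \<equiv> stable (A \<union> A') (B \<union> B') QA QB"
  shows "(\<exists>\<mu>. stable A B PA PB \<mu> \<and> a \<notin> Domain \<mu>) \<longleftrightarrow> (\<exists>\<nu>. S \<nu> \<and> (a, f a) \<in> \<nu>)"
    and "(\<exists>\<nu>. S \<nu> \<and> (a, f a) \<in> \<nu>) \<longleftrightarrow> (\<forall>\<nu>. S \<nu> \<longrightarrow> (a, f a) \<in> \<nu>)"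
proof -
  have "finite (A \<union> A')" using finite bij_betw_finite[OF g] by auto
  moreover have "\<forall>x\<in>A \<union> A'. distinct (QA x) \<and> set (QA x) \<subseteq> B \<union> B'"
    using QA_full unfolding full_profiles_def profiles_def by blast
  ultimately have ex: "\<exists>\<nu>. S \<nu>" unfolding S_def by (rule stable_exists)
  have single: "(a, f a) \<in> \<nu>" if \<mu>: "stable A B PA PB \<mu>" "a \<notin> Domain \<mu>" and "S \<nu>" for \<mu> \<nu>
  proof -
    have st: "stable (A \<union> A') (B \<union> B') QA QB \<nu>" using \<open>S \<nu>\<close> unfolding S_def .
    have "a \<notin> Domain (\<nu> \<inter> A \<times> B)"
      using stable_Domain_subset[OF finite \<mu>(1) stable_restrict[OF st]] \<mu>(2) by blast
    then show ?thesis using stable_padded_unmatched[OF st \<open>a \<in> A\<close>] by blast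
  qed
  have married: "stable A B PA PB (\<nu> \<inter> A \<times> B) \<and> a \<notin> Domain (\<nu> \<inter> A \<times> B)"
    if "S \<nu>" "(a, f a) \<in> \<nu>" for \<nu>
  proof
    have st: "stable (A \<union> A') (B \<union> B') QA QB \<nu>" using \<open>S \<nu>\<close> unfolding S_def .
    show "stable A B PA PB (\<nu> \<inter> A \<times> B)" using stable_restrict[OF st] .
    have "f a \<notin> B" using bij_betw_apply[OF f] disjoint \<open>a \<in> A\<close> by blast
    then show "a \<notin> Domain (\<nu> \<inter> A \<times> B)"
      using marriage_functional[OF stable_marriage[OF st] that(2)] by blast
  qed
  show "(\<exists>\<mu>. stable A B PA PB \<mu> \<and> a \<notin> Domain \<mu>) \<longleftrightarrow> (\<exists>\<nu>. S \<nu> \<and> (a, f a) \<in> \<nu>)"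
    using ex single married by meson
  show "(\<exists>\<nu>. S \<nu> \<and> (a, f a) \<in> \<nu>) \<longleftrightarrow> (\<forall>\<nu>. S \<nu> \<longrightarrow> (a, f a) \<in> \<nu>)"
    using ex single married by meson
qed

end

theorem lemma23:
  fixes n :: nat and W W' M M' :: "'a set" and w m' :: 'a
  assumes "finite W" "finite W'" "finite M" "finite M'"
    and "card W = n" "card W' = n" "card M = n" "card M' = n"
    and "W \<inter> W' = {}" "W \<inter> M = {}" "W \<inter> M' = {}"
    and "W' \<inter> M = {}" "W' \<inter> M' = {}" "M \<inter> M' = {}"
    and "w \<in> W" "m' \<in> M'"
  shows "\<exists>FW FM.
    (\<forall>PW\<in>profiles W M. FW PW \<in> full_profiles (W \<union> W') (M \<union> M')) \<and>
    (\<forall>PM\<in>profiles M W. FM PM \<in> full_profiles (M \<union> M') (W \<union> W')) \<and>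
    (\<forall>PW\<in>profiles W M. \<forall>PM\<in>profiles M W.
       ((\<exists>\<mu>. stable W M PW PM \<mu> \<and> w \<notin> Domain \<mu>) \<longleftrightarrow>
        (\<exists>\<mu>. stable (W \<union> W') (M \<union> M') (FW PW) (FM PM) \<mu> \<and> (w, m') \<in> \<mu>)) \<and>
       ((\<exists>\<mu>. stable (W \<union> W') (M \<union> M') (FW PW) (FM PM) \<mu> \<and> (w, m') \<in> \<mu>) \<longleftrightarrow>
        (\<forall>\<mu>. stable (W \<union> W') (M \<union> M') (FW PW) (FM PM) \<mu> \<longrightarrow> (w, m') \<in> \<mu>)))"
proof -
  obtain f where f_bij: "bij_betw f W M'" and f_w: "f w = m'"
    using bij_betw_sending[of W M' w m'] assms by auto
  obtain g where g_bij: "bij_betw g M W'"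
    using finite_same_card_bij[of M W'] assms by auto
  have market: "padded_market W W' M M' f g PW PM"
    if "PW \<in> profiles W M" "PM \<in> profiles M W" for PW PM
    using that assms(1,3,9,14) f_bij g_bij by (simp add: padded_market_def)
  show ?thesis
    using padded_profile_full[OF assms(1,3) f_bij g_bij assms(14)]
      padded_profile_full[OF assms(3,1) g_bij f_bij assms(9)]
      padded_market.padded_married_iff_single[OF market assms(15)] f_w
    by (intro exI[of _ "padded_profile W W' M M' f g"] exI[of _ "padded_profile M M' W W' g f"]) simp
qed

end
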